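(* Let $G$ be a finite group with $d(G)\geq 2$, and assume that $G$ is $2$-flexible. Then $G$ is $1$-flexible if and only if $\mathrm{Cyc}(G)=1$.
   Context: For a finite group $H$, $d(H)$ denotes the minimal size of a generating set of $H$. For an integer $1 \leq k \leq d(G)$, $G$ is called $k$-flexible if for any $x_1,\dots,x_k \in G$ with $d(\langle x_1,\dots,x_k\rangle)=k$ there exist $x_{k+1},\dots,x_{d(G)} \in G$ such that $\langle x_1,\dots,x_{d(G)}\rangle = G$. The cycliciser of $G$ is $\mathrm{Cyc}(G) = \{c \in G \mid \langle c,g\rangle \text{ is cyclic for all } g \in G\}$. *)

theory Defs
  imports "HOL-Algebra.Algebra"
begin

definition gen_rank :: "('a, 'b) monoid_scheme \<Rightarrow> 'a set \<Rightarrow> nat" where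
  "gen_rank G H = (LEAST n. \<exists>S. S \<subseteq> H \<and> finite S \<and> card S = n \<and> generate G S = H)"

definition flexible :: "('a, 'b) monoid_scheme \<Rightarrow> nat \<Rightarrow> bool" where
  "flexible G k \<longleftrightarrow> 1 \<le> k \<and> k \<le> gen_rank G (carrier G) \<and>
     (\<forall>xs. length xs = k \<and> set xs \<subseteq> carrier G \<and> gen_rank G (generate G (set xs)) = k \<longrightarrow>
        (\<exists>ys. length ys = gen_rank G (carrier G) - k \<and> set ys \<subseteq> carrier G \<and>
              generate G (set (xs @ ys)) = carrier G))"

definition cyclic_sub :: "('a, 'b) monoid_scheme \<Rightarrow> 'a set \<Rightarrow> bool" where
  "cyclic_sub G H \<longleftrightarrow> (\<exists>h \<in> carrier G. generate G {h} = H)"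

definition cycliciser :: "('a, 'b) monoid_scheme \<Rightarrow> 'a set" where
  "cycliciser G = {c \<in> carrier G. \<forall>g \<in> carrier G. cyclic_sub G (generate G {c, g})}"

end

theory Submission
  imports Defs
begin

text \<open>
  An element \<open>c \<noteq> \<one>\<close> of the cycliciser obstructs 1-flexibility: if \<open>[c, y, ys]\<close> generated \<open>G\<close>
  with \<open>d(G)\<close> entries, then replacing \<open>c, y\<close> by a generator \<open>z\<close> of the cyclic group \<open>\<langle>c, y\<rangle>\<close>
  would give a generating set of size \<open>d(G) - 1\<close>. Conversely, if \<open>x\<close> has \<open>d(\<langle>x\<rangle>) = 1\<close>, then
  \<open>x \<noteq> \<one>\<close>, so \<open>x\<close> lies outside a trivial cycliciser and some \<open>g\<close> makes \<open>\<langle>x, g\<rangle>\<close> non-cyclic,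
  i.e. of rank 2; 2-flexibility extends \<open>[x, g]\<close>, hence \<open>[x]\<close>, to a generating list.
\<close>

lemma subset_generate: "S \<subseteq> generate G S"
  by (auto intro: generate.incl)

lemma gen_rank_generate_le_card:
  assumes "finite S"
  shows "gen_rank G (generate G S) \<le> card S"
  unfolding gen_rank_def by (rule Least_le) (use assms subset_generate[of S G] in blast)

lemma gen_rank_generate_witness:
  assumes "finite S"
  obtains T where "T \<subseteq> generate G S" "finite T" "card T = gen_rank G (generate G S)"
    "generate G T = generate G S"
proof -
  have "\<exists>T. T \<subseteq> generate G S \<and> finite T \<and> card T = gen_rank G (generate G S) \<and>
      generate G T = generate G S"
    unfolding gen_rank_def by (rule LeastI_ex) (use assms subset_generate[of S G] in blast)
  then show ?thesis using that by blast
qed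

lemma flexibleD:
  assumes "flexible G k" "length xs = k" "set xs \<subseteq> carrier G" "gen_rank G (generate G (set xs)) = k"
  obtains ys where "length ys = gen_rank G (carrier G) - k" "set ys \<subseteq> carrier G"
    "generate G (set (xs @ ys)) = carrier G"
  using assms unfolding flexible_def by blast

lemma (in group) generate_Un_cong:
  assumes "A \<subseteq> carrier G" "A' \<subseteq> carrier G" "B \<subseteq> carrier G"
    and "generate G A = generate G A'"
  shows "generate G (A \<union> B) = generate G (A' \<union> B)"
proof -
  have incl: "generate G (C \<union> B) \<subseteq> generate G (D \<union> B)"
    if "D \<subseteq> carrier G" "generate G C = generate G D" for C D
  proof (rule generate_subgroup_incl)
    have "C \<subseteq> generate G D" using that(2) subset_generate[of C G] by blast
    also have "\<dots> \<subseteq> generate G (D \<union> B)" by (rule mono_generate) blast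
    finally show "C \<union> B \<subseteq> generate G (D \<union> B)" using subset_generate[of "D \<union> B" G] by blast
    show "subgroup (generate G (D \<union> B)) G" using that(1) assms(3) by (intro generate_is_subgroup) blast
  qed
  show ?thesis using assms by (intro equalityI incl) auto
qed

lemma (in group) generate_insert_one:
  assumes "A \<subseteq> carrier G"
  shows "generate G (insert \<one> A) = generate G A"
  using generate_Un_cong[of "{\<one>}" "{}" A] assms by (simp add: generate_one generate_empty)

lemma (in group) one_in_cycliciser: "\<one> \<in> cycliciser G"
  unfolding cycliciser_def cyclic_sub_def by (auto simp: generate_insert_one)

lemma (in group) gen_rank_generate_eq_0_iff:
  assumes "finite S"
  shows "gen_rank G (generate G S) = 0 \<longleftrightarrow> generate G S = {\<one>}"
proof
  assume rank: "gen_rank G (generate G S) = 0"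
  obtain T where T: "T \<subseteq> generate G S" "finite T" "card T = gen_rank G (generate G S)"
    "generate G T = generate G S"
    by (rule gen_rank_generate_witness[OF assms(1)])
  from T(2,3) rank have "T = {}" by simp
  with T(4) show "generate G S = {\<one>}" by (simp add: generate_empty)
next
  assume "generate G S = {\<one>}"
  then show "gen_rank G (generate G S) = 0"
    using gen_rank_generate_le_card[of "{}" G] by (simp add: generate_empty)
qed

lemma (in group) gen_rank_generate_le_1_iff:
  assumes "finite S" "S \<subseteq> carrier G"
  shows "gen_rank G (generate G S) \<le> 1 \<longleftrightarrow> cyclic_sub G (generate G S)"
proof
  assume rank: "gen_rank G (generate G S) \<le> 1"
  obtain T where T: "T \<subseteq> generate G S" "finite T" "card T = gen_rank G (generate G S)"
    "generate G T = generate G S"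
    by (rule gen_rank_generate_witness[OF assms(1)])
  have T_carrier: "T \<subseteq> carrier G" using T(1) generate_incl[OF assms(2)] by blast
  have "card T = 0 \<or> card T = Suc 0" using rank T(3) by linarith
  then consider "T = {}" | h where "T = {h}"
    using T(2) by (auto simp: card_1_singleton_iff)
  then show "cyclic_sub G (generate G S)"
  proof cases
    case 1
    then have "generate G S = {\<one>}" using T(4) by (simp add: generate_empty)
    then have "generate G {\<one>} = generate G S" by (simp add: generate_one)
    then show ?thesis unfolding cyclic_sub_def by blast
  next
    case 2
    then show ?thesis using T(4) T_carrier unfolding cyclic_sub_def by blast
  qed
next
  assume "cyclic_sub G (generate G S)"
  then obtain h where "h \<in> carrier G" "generate G {h} = generate G S"
    unfolding cyclic_sub_def by blast
  then show "gen_rank G (generate G S) \<le> 1"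
    using gen_rank_generate_le_card[of "{h}" G] by simp
qed

lemma (in group) gen_rank_generate_singleton:
  assumes "c \<in> carrier G"
  shows "gen_rank G (generate G {c}) = 1 \<longleftrightarrow> c \<noteq> \<one>"
proof -
  have "gen_rank G (generate G {c}) \<le> 1"
    using gen_rank_generate_le_1_iff[of "{c}"] assms unfolding cyclic_sub_def by auto
  moreover have "generate G {c} = {\<one>} \<longleftrightarrow> c = \<one>"
    using generate.incl[of c "{c}" G] generate_one by auto
  ultimately show ?thesis
    using gen_rank_generate_eq_0_iff[of "{c}"] by (cases "c = \<one>") auto
qed

lemma (in group) gen_rank_generate_pair:
  assumes "x \<in> carrier G" "g \<in> carrier G" "\<not> cyclic_sub G (generate G {x, g})"
  shows "gen_rank G (generate G {x, g}) = 2"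
proof -
  have "gen_rank G (generate G {x, g}) \<le> card {x, g}"
    by (rule gen_rank_generate_le_card) simp
  also have "\<dots> \<le> 2" by (simp add: card_insert_le_m1)
  finally show ?thesis
    using gen_rank_generate_le_1_iff[of "{x, g}"] assms by auto
qed

lemma (in group) cycliciser_eq_one_if_flexible_1:
  assumes "flexible G 1" "gen_rank G (carrier G) \<ge> 2"
  shows "cycliciser G = {\<one>}"
proof (rule ccontr)
  define d where "d = gen_rank G (carrier G)"
  assume "cycliciser G \<noteq> {\<one>}"
  then obtain c where c: "c \<in> cycliciser G" "c \<noteq> \<one>" using one_in_cycliciser by blast
  have c_carrier: "c \<in> carrier G" using c(1) unfolding cycliciser_def by blast
  have rank: "gen_rank G (generate G (set [c])) = 1"
    using gen_rank_generate_singleton c_carrier c(2) by simp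
  obtain ys where ys: "length ys = d - 1" "set ys \<subseteq> carrier G"
    "generate G (set ([c] @ ys)) = carrier G"
    unfolding d_def by (rule flexibleD[OF assms(1) _ _ rank]) (use c_carrier in auto)
  then obtain y ys' where y: "ys = y # ys'" using assms(2) unfolding d_def by (cases ys) auto
  then have y_carrier: "y \<in> carrier G" using ys(2) by simp
  obtain z where z: "z \<in> carrier G" "generate G {z} = generate G {c, y}"
    using c(1) y_carrier unfolding cycliciser_def cyclic_sub_def by blast
  have "generate G ({z} \<union> set ys') = generate G ({c, y} \<union> set ys')"
    using generate_Un_cong[of "{z}" "{c, y}" "set ys'"] z c_carrier y_carrier ys(2) y by simp
  also have "\<dots> = carrier G" using ys(3) y by simp
  finally have "d \<le> card ({z} \<union> set ys')"
    using gen_rank_generate_le_card[of "{z} \<union> set ys'" G] unfolding d_def by simp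
  also have "\<dots> \<le> 1 + length ys'"
    using card_length[of ys'] card_Un_le[of "{z}" "set ys'"] by simp
  also have "\<dots> = d - 1" using ys(1) y by simp
  finally show False using assms(2) unfolding d_def by linarith
qed

lemma (in group) flexible_1_if_cycliciser_eq_one:
  assumes "flexible G 2" "cycliciser G = {\<one>}"
  shows "flexible G 1"
  unfolding flexible_def
proof (intro conjI allI impI)
  show "1 \<le> gen_rank G (carrier G)" using assms(1) unfolding flexible_def by simp
  fix xs :: "'a list"
  assume xs: "length xs = 1 \<and> set xs \<subseteq> carrier G \<and> gen_rank G (generate G (set xs)) = 1"
  then obtain x where x: "xs = [x]" "x \<in> carrier G" by (cases xs) auto
  then have "x \<notin> cycliciser G"
    using xs gen_rank_generate_singleton assms(2) by auto
  then obtain g where g: "g \<in> carrier G" "\<not> cyclic_sub G (generate G {x, g})"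
    using x(2) unfolding cycliciser_def by blast
  have rank: "gen_rank G (generate G (set [x, g])) = 2"
    using gen_rank_generate_pair x(2) g by simp
  obtain ys where "length ys = gen_rank G (carrier G) - 2" "set ys \<subseteq> carrier G"
    "generate G (set ([x, g] @ ys)) = carrier G"
    by (rule flexibleD[OF assms(1) _ _ rank]) (use x(2) g(1) in auto)
  then show "\<exists>ys. length ys = gen_rank G (carrier G) - 1 \<and> set ys \<subseteq> carrier G \<and>
      generate G (set (xs @ ys)) = carrier G"
    using x g(1) assms(1) unfolding flexible_def by (intro exI[of _ "g # ys"]) auto
qed simp

theorem lemma2p5:
  fixes G :: "('a, 'b) monoid_scheme"
  assumes "group G" and "finite (carrier G)"
    and "gen_rank G (carrier G) \<ge> 2"
    and "flexible G 2"
  shows "flexible G 1 \<longleftrightarrow> cycliciser G = {\<one>\<^bsub>G\<^esub>}"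
  using group.cycliciser_eq_one_if_flexible_1[OF assms(1) _ assms(3)]
    group.flexible_1_if_cycliciser_eq_one[OF assms(1,4)] by blast

end
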